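(* Let $T\ge 1$, $d=2T$, $\lambda,\mu>0$, $a\in\mathbb{R}$, $b,c>0$, and consider $F$ built from the functions $f_i$ described in the context. Let $x^\star$ be the unique minimizer of $F$. Then all blocks $x^\star_i$ of the first group are equal to a common vector $y^\star\in\mathbb{R}^d$, and all blocks of the second group are equal to a common vector $z^\star\in\mathbb{R}^d$. Moreover, for every $1\le i\le 2T-1$, $$w_{i+1}=Q_r\,w_i,$$ where $w_i=(z^\star_i,y^\star_i)^\top$ if $i$ is even and $w_i=(y^\star_i,z^\star_i)^\top$ if $i$ is odd. Here $r=\tfrac12$ if $n$ is even and $r=\tfrac{M}{n}$ if $n=2M+1$. With $s=\mu/\lambda$, $$Q_r=\begin{pmatrix}-\frac{r}{c} & \frac{c+s+r}{c}\\[2pt] -\frac{c+s+r}{c} & \frac{(c+s+r)^2}{cr}-\frac{c}{r}\end{pmatrix}.$$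
   Context: The objective is $F(x)=\frac1n\sum_{i=1}^n f_i(x_i)+\lambda\frac1{2n}\sum_{i=1}^n\|x_i-\bar x\|^2$ for $x=[x_1,\dots,x_n]\in\mathbb{R}^{nd}$, where $\bar x=\frac1n\sum_i x_i$. The functions below are written with $y=(y_1,\dots,y_{2T})\in\mathbb{R}^{2T}$. Even $n$. For $1\le i\le n/2$ (first group), $$f_i(y)=\tfrac{\mu}{2}\|y\|^2+ay_1+\tfrac{\lambda c}{2}\sum_{j=1}^{T-1}(y_{2j}-y_{2j+1})^2+\tfrac{\lambda b}{2}y_{2T}^2 .$$ For $n/2<i\le n$ (second group), $$f_i(y)=\tfrac{\mu}{2}\|y\|^2+\tfrac{\lambda c}{2}\sum_{j=0}^{T-1}(y_{2j+1}-y_{2j+2})^2 .$$ Odd $n=2M+1$ with $M\ge1$. For $1\le i\le M$ (first group), $$f_i(y)=\tfrac{M+1}{M}\tfrac{\mu}{2}\|y\|^2+ay_1+\tfrac{\lambda}{2}\tfrac{M+1}{M}c\sum_{j=1}^{T-1}(y_{2j}-y_{2j+1})^2+\tfrac{\lambda b}{2}y_{2T}^2 .$$ For $M<i\le n$ (second group), $f_i$ is the second-group function from the even case. *)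

theory Defs
  imports "HOL-Analysis.Analysis"
begin

text \<open>Vectors y in R^(2T) are represented as functions nat => real, using coordinates 1..2T.
Agents are indexed 1..n; a point x = [x_1,...,x_n] is a function nat => (nat => real).\<close>

definition sqnorm :: "nat \<Rightarrow> (nat \<Rightarrow> real) \<Rightarrow> real" where
  "sqnorm T y = (\<Sum>j=1..2*T. (y j)^2)"

definition f_first_even :: "nat \<Rightarrow> real \<Rightarrow> real \<Rightarrow> real \<Rightarrow> real \<Rightarrow> real \<Rightarrow> (nat \<Rightarrow> real) \<Rightarrow> real" where
  "f_first_even T lam mu a b c y =
     mu / 2 * sqnorm T y + a * y 1
     + lam * c / 2 * (\<Sum>j=1..T-1. (y (2*j) - y (2*j+1))^2)
     + lam * b / 2 * (y (2*T))^2"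

definition f_first_odd :: "nat \<Rightarrow> nat \<Rightarrow> real \<Rightarrow> real \<Rightarrow> real \<Rightarrow> real \<Rightarrow> real \<Rightarrow> (nat \<Rightarrow> real) \<Rightarrow> real" where
  "f_first_odd M T lam mu a b c y =
     (real M + 1) / real M * (mu / 2) * sqnorm T y + a * y 1
     + lam / 2 * ((real M + 1) / real M) * c * (\<Sum>j=1..T-1. (y (2*j) - y (2*j+1))^2)
     + lam * b / 2 * (y (2*T))^2"

definition f_second :: "nat \<Rightarrow> real \<Rightarrow> real \<Rightarrow> real \<Rightarrow> (nat \<Rightarrow> real) \<Rightarrow> real" where
  "f_second T lam mu c y =
     mu / 2 * sqnorm T y + lam * c / 2 * (\<Sum>j=0..T-1. (y (2*j+1) - y (2*j+2))^2)"

definition first_size :: "nat \<Rightarrow> nat" where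
  "first_size n = n div 2"

definition f_loc :: "nat \<Rightarrow> nat \<Rightarrow> real \<Rightarrow> real \<Rightarrow> real \<Rightarrow> real \<Rightarrow> real \<Rightarrow> nat \<Rightarrow> (nat \<Rightarrow> real) \<Rightarrow> real" where
  "f_loc n T lam mu a b c i =
     (if i \<le> first_size n then
        (if even n then f_first_even T lam mu a b c else f_first_odd (n div 2) T lam mu a b c)
      else f_second T lam mu c)"

definition xbar :: "nat \<Rightarrow> (nat \<Rightarrow> nat \<Rightarrow> real) \<Rightarrow> nat \<Rightarrow> real" where
  "xbar n x j = (1 / real n) * (\<Sum>i=1..n. x i j)"

definition Fobj :: "nat \<Rightarrow> nat \<Rightarrow> real \<Rightarrow> real \<Rightarrow> real \<Rightarrow> real \<Rightarrow> real \<Rightarrow> (nat \<Rightarrow> nat \<Rightarrow> real) \<Rightarrow> real" where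
  "Fobj n T lam mu a b c x =
     (1 / real n) * (\<Sum>i=1..n. f_loc n T lam mu a b c i (x i))
     + lam / (2 * real n) * (\<Sum>i=1..n. sqnorm T (\<lambda>j. x i j - xbar n x j))"

definition r_par :: "nat \<Rightarrow> real" where
  "r_par n = (if even n then 1/2 else real (n div 2) / real n)"

definition Qmat :: "real \<Rightarrow> real \<Rightarrow> real \<Rightarrow> real ^ 2 ^ 2" where
  "Qmat r s c = (let k = c + s + r in
     vector [vector [- r / c, k / c],
             vector [- k / c, k^2 / (c * r) - c / r]])"

definition wvec :: "(nat \<Rightarrow> real) \<Rightarrow> (nat \<Rightarrow> real) \<Rightarrow> nat \<Rightarrow> real ^ 2" where
  "wvec y z i = (if even i then vector [z i, y i] else vector [y i, z i])"

end

theory Submission imports Defs begin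

text \<open>Every local function is quadratic, so F restricted to a line through the minimizer is a
  quadratic polynomial whose linear coefficient must vanish; this gives blockwise stationarity
  \<open>grad f\<^sub>i (x\<^sub>i) + \<lambda> (x\<^sub>i - xbar) = 0\<close>. Blocks of one group solve the same equation with a monotone
  gradient, hence coincide, say with y and z. Then the mean is \<open>(M y + (n - M) z) / n\<close> for the
  first-group size M, and reading the stationarity equations at the two coordinates joined by a
  coupling term gives a 2\<times>2 linear system whose solution is exactly the step by \<open>Q\<^sub>r\<close>, \<open>r = M / n\<close>.\<close>

lemma sum_power2_affine:
  fixes u v :: "'i \<Rightarrow> real"
  shows "(\<Sum>j\<in>S. (u j + t * v j)\<^sup>2)
         = (\<Sum>j\<in>S. (u j)\<^sup>2) + t * (2 * (\<Sum>j\<in>S. u j * v j)) + t\<^sup>2 * (\<Sum>j\<in>S. (v j)\<^sup>2)"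
  by (simp add: power2_sum power_mult_distrib sum.distrib sum_distrib_left algebra_simps)

lemma quadratic_nonneg_linear_coeff_eq_0:
  fixes g h :: real
  assumes "\<forall>t. 0 \<le> g * t + h * t\<^sup>2"
  shows "g = 0"
proof (rule ccontr)
  assume "g \<noteq> 0"
  define e where "e = 1 / (\<bar>h\<bar> + 1)"
  have "e > 0" and "h * e < 1"
    unfolding e_def by (auto simp: divide_simps)
  have "0 \<le> g * (- g * e) + h * (- g * e)\<^sup>2" using assms by blast
  also have "\<dots> = g\<^sup>2 * e * (h * e - 1)" by (simp add: power2_eq_square algebra_simps)
  also have "\<dots> < 0" using \<open>g \<noteq> 0\<close> \<open>e > 0\<close> \<open>h * e < 1\<close> by (simp add: mult_pos_neg)
  finally show False by simp
qed

definition quadratic_expansion ::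
    "((nat \<Rightarrow> real) \<Rightarrow> real) \<Rightarrow> ((nat \<Rightarrow> real) \<Rightarrow> (nat \<Rightarrow> real) \<Rightarrow> real) \<Rightarrow> ((nat \<Rightarrow> real) \<Rightarrow> real) \<Rightarrow> bool"
  where "quadratic_expansion f D H \<longleftrightarrow> (\<forall>u v t. f (\<lambda>j. u j + t * v j) = f u + t * D u v + t\<^sup>2 * H v)"

lemma quadratic_expansion_deriv_diff:
  assumes "quadratic_expansion f D H"
  shows "D u (\<lambda>j. u j - w j) - D w (\<lambda>j. u j - w j) = 2 * H (\<lambda>j. u j - w j)"
proof -
  let ?d = "\<lambda>j. u j - w j"
  have exp: "f (\<lambda>j. x j + t * ?d j) = f x + t * D x ?d + t\<^sup>2 * H ?d" for x t
    using assms unfolding quadratic_expansion_def by simp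
  have "(\<lambda>j. w j + 1 * ?d j) = u" and "(\<lambda>j. u j + 1 * ?d j) = (\<lambda>j. w j + 2 * ?d j)" by auto
  with exp[of w 1] exp[of u 1] exp[of w 2] show ?thesis by (simp add: power2_eq_square)
qed

definition dot :: "nat \<Rightarrow> (nat \<Rightarrow> real) \<Rightarrow> (nat \<Rightarrow> real) \<Rightarrow> real" where
  "dot T u v = (\<Sum>j=1..2*T. u j * v j)"

definition coupling_first :: "nat \<Rightarrow> (nat \<Rightarrow> real) \<Rightarrow> (nat \<Rightarrow> real) \<Rightarrow> real" where
  "coupling_first T u v = (\<Sum>j=1..T-1. (u (2*j) - u (2*j+1)) * (v (2*j) - v (2*j+1)))"

definition coupling_second :: "nat \<Rightarrow> (nat \<Rightarrow> real) \<Rightarrow> (nat \<Rightarrow> real) \<Rightarrow> real" where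
  "coupling_second T u v = (\<Sum>j=0..T-1. (u (2*j+1) - u (2*j+2)) * (v (2*j+1) - v (2*j+2)))"

lemma dot_nonneg: "0 \<le> dot T v v"
  unfolding dot_def by (intro sum_nonneg) simp

lemma coupling_first_nonneg: "0 \<le> coupling_first T v v"
  unfolding coupling_first_def by (intro sum_nonneg) simp

lemma coupling_second_nonneg: "0 \<le> coupling_second T v v"
  unfolding coupling_second_def by (intro sum_nonneg) simp

lemma dot_eq_0_iff: "dot T v v = 0 \<longleftrightarrow> (\<forall>j\<in>{1..2*T}. v j = 0)"
  unfolding dot_def by (subst sum_nonneg_eq_0_iff) auto

lemma dot_diff_left: "dot T u v - dot T w v = dot T (\<lambda>j. u j - w j) v"
  unfolding dot_def by (simp add: sum_subtractf[symmetric] algebra_simps)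

lemma sqnorm_affine:
  "sqnorm T (\<lambda>j. u j + t * v j) = sqnorm T u + t * (2 * dot T u v) + t\<^sup>2 * sqnorm T v"
  unfolding sqnorm_def dot_def by (rule sum_power2_affine)

lemma sqnorm_eq_dot: "sqnorm T v = dot T v v"
  unfolding sqnorm_def dot_def by (simp add: power2_eq_square)

lemma coupling_first_affine:
  "(\<Sum>j=1..T-1. (u (2*j) + t * v (2*j) - (u (2*j+1) + t * v (2*j+1)))\<^sup>2)
   = (\<Sum>j=1..T-1. (u (2*j) - u (2*j+1))\<^sup>2) + t * (2 * coupling_first T u v) + t\<^sup>2 * coupling_first T v v"
proof -
  have "(\<Sum>j=1..T-1. (u (2*j) + t * v (2*j) - (u (2*j+1) + t * v (2*j+1)))\<^sup>2)
      = (\<Sum>j=1..T-1. ((u (2*j) - u (2*j+1)) + t * (v (2*j) - v (2*j+1)))\<^sup>2)"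
    by (rule sum.cong) (auto simp: algebra_simps)
  then show ?thesis unfolding sum_power2_affine coupling_first_def by (simp add: power2_eq_square)
qed

lemma coupling_second_affine:
  "(\<Sum>j=0..T-1. (u (2*j+1) + t * v (2*j+1) - (u (2*j+2) + t * v (2*j+2)))\<^sup>2)
   = (\<Sum>j=0..T-1. (u (2*j+1) - u (2*j+2))\<^sup>2) + t * (2 * coupling_second T u v) + t\<^sup>2 * coupling_second T v v"
proof -
  have "(\<Sum>j=0..T-1. (u (2*j+1) + t * v (2*j+1) - (u (2*j+2) + t * v (2*j+2)))\<^sup>2)
      = (\<Sum>j=0..T-1. ((u (2*j+1) - u (2*j+2)) + t * (v (2*j+1) - v (2*j+2)))\<^sup>2)"
    by (rule sum.cong) (auto simp: algebra_simps)
  then show ?thesis unfolding sum_power2_affine coupling_second_def by (simp add: power2_eq_square)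
qed

definition first_deriv :: "nat \<Rightarrow> real \<Rightarrow> real \<Rightarrow> real \<Rightarrow> real \<Rightarrow> real \<Rightarrow> real \<Rightarrow> (nat \<Rightarrow> real) \<Rightarrow> (nat \<Rightarrow> real) \<Rightarrow> real"
  where "first_deriv T lam mu a b c k u v =
    k * mu * dot T u v + a * v 1 + k * lam * c * coupling_first T u v + lam * b * u (2*T) * v (2*T)"

definition first_curv :: "nat \<Rightarrow> real \<Rightarrow> real \<Rightarrow> real \<Rightarrow> real \<Rightarrow> real \<Rightarrow> (nat \<Rightarrow> real) \<Rightarrow> real"
  where "first_curv T lam mu b c k v =
    k * mu / 2 * dot T v v + k * lam * c / 2 * coupling_first T v v + lam * b / 2 * (v (2*T))\<^sup>2"

definition second_deriv :: "nat \<Rightarrow> real \<Rightarrow> real \<Rightarrow> real \<Rightarrow> (nat \<Rightarrow> real) \<Rightarrow> (nat \<Rightarrow> real) \<Rightarrow> real"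
  where "second_deriv T lam mu c u v = mu * dot T u v + lam * c * coupling_second T u v"

definition second_curv :: "nat \<Rightarrow> real \<Rightarrow> real \<Rightarrow> real \<Rightarrow> (nat \<Rightarrow> real) \<Rightarrow> real"
  where "second_curv T lam mu c v = mu / 2 * dot T v v + lam * c / 2 * coupling_second T v v"

lemma quadratic_expansion_f_first_even:
  "quadratic_expansion (f_first_even T lam mu a b c)
     (first_deriv T lam mu a b c 1) (first_curv T lam mu b c 1)"
  unfolding quadratic_expansion_def f_first_even_def first_deriv_def first_curv_def
    sqnorm_affine coupling_first_affine sqnorm_eq_dot
  by (simp add: power2_eq_square algebra_simps)

lemma quadratic_expansion_f_first_odd:
  "quadratic_expansion (f_first_odd M T lam mu a b c)
     (first_deriv T lam mu a b c ((real M + 1) / real M)) (first_curv T lam mu b c ((real M + 1) / real M))"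
proof -
  define k where "k = (real M + 1) / real M"
  show ?thesis
    unfolding quadratic_expansion_def f_first_odd_def first_deriv_def first_curv_def
      sqnorm_affine coupling_first_affine sqnorm_eq_dot k_def[symmetric]
    by (simp add: power2_eq_square algebra_simps)
qed

lemma quadratic_expansion_f_second:
  "quadratic_expansion (f_second T lam mu c) (second_deriv T lam mu c) (second_curv T lam mu c)"
  unfolding quadratic_expansion_def f_second_def second_deriv_def second_curv_def
    sqnorm_affine coupling_second_affine sqnorm_eq_dot
  by (simp add: power2_eq_square algebra_simps)

text \<open>The weight of the first-group functions: 1 for even n and \<open>(M + 1) / M\<close> for \<open>n = 2M + 1\<close>.\<close>
definition group_size_ratio :: "nat \<Rightarrow> real" where
  "group_size_ratio n = (real n - real (first_size n)) / real (first_size n)"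

definition loc_deriv :: "nat \<Rightarrow> nat \<Rightarrow> real \<Rightarrow> real \<Rightarrow> real \<Rightarrow> real \<Rightarrow> real \<Rightarrow> nat \<Rightarrow> (nat \<Rightarrow> real) \<Rightarrow> (nat \<Rightarrow> real) \<Rightarrow> real"
  where "loc_deriv n T lam mu a b c i =
    (if i \<le> first_size n then first_deriv T lam mu a b c (group_size_ratio n) else second_deriv T lam mu c)"

definition loc_curv :: "nat \<Rightarrow> nat \<Rightarrow> real \<Rightarrow> real \<Rightarrow> real \<Rightarrow> real \<Rightarrow> nat \<Rightarrow> (nat \<Rightarrow> real) \<Rightarrow> real"
  where "loc_curv n T lam mu b c i =
    (if i \<le> first_size n then first_curv T lam mu b c (group_size_ratio n) else second_curv T lam mu c)"

lemma group_size_ratio_even: "even n \<Longrightarrow> 0 < n \<Longrightarrow> group_size_ratio n = 1"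
  unfolding group_size_ratio_def first_size_def by (auto elim!: evenE)

lemma group_size_ratio_odd: "odd n \<Longrightarrow> group_size_ratio n = (real (n div 2) + 1) / real (n div 2)"
  unfolding group_size_ratio_def first_size_def by (auto elim!: oddE)

lemma group_size_ratio_pos: "2 \<le> n \<Longrightarrow> 0 < group_size_ratio n"
  unfolding group_size_ratio_def first_size_def by simp

lemma quadratic_expansion_f_loc:
  assumes "0 < n"
  shows "quadratic_expansion (f_loc n T lam mu a b c i) (loc_deriv n T lam mu a b c i) (loc_curv n T lam mu b c i)"
  using assms quadratic_expansion_f_first_even quadratic_expansion_f_first_odd quadratic_expansion_f_second
  unfolding f_loc_def loc_deriv_def loc_curv_def by (simp add: group_size_ratio_even group_size_ratio_odd)

lemma loc_curv_nonneg:
  assumes "0 \<le> lam" "0 \<le> mu" "0 \<le> b" "0 \<le> c"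
  shows "0 \<le> loc_curv n T lam mu b c i v"
proof -
  have "0 \<le> group_size_ratio n" unfolding group_size_ratio_def first_size_def by simp
  then show ?thesis
    using assms dot_nonneg[of T v] coupling_first_nonneg[of T v] coupling_second_nonneg[of T v]
    unfolding loc_curv_def first_curv_def second_curv_def by simp
qed

lemma loc_deriv_zero_direction: "loc_deriv n T lam mu a b c i u (\<lambda>j. 0) = 0"
  unfolding loc_deriv_def first_deriv_def second_deriv_def dot_def coupling_first_def coupling_second_def
  by simp

definition Fobj_deriv :: "nat \<Rightarrow> nat \<Rightarrow> real \<Rightarrow> real \<Rightarrow> real \<Rightarrow> real \<Rightarrow> real \<Rightarrow> (nat \<Rightarrow> nat \<Rightarrow> real) \<Rightarrow> (nat \<Rightarrow> nat \<Rightarrow> real) \<Rightarrow> real"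
  where "Fobj_deriv n T lam mu a b c x E =
    (\<Sum>i=1..n. loc_deriv n T lam mu a b c i (x i) (E i) + lam * dot T (\<lambda>j. x i j - xbar n x j) (E i)) / real n"

lemma xbar_affine: "xbar n (\<lambda>i j. x i j + t * E i j) j = xbar n x j + t * xbar n E j"
  unfolding xbar_def by (simp add: sum.distrib sum_distrib_left algebra_simps)

lemma sum_deviation_xbar: "0 < n \<Longrightarrow> (\<Sum>i=1..n. x i j - xbar n x j) = 0"
  unfolding xbar_def by (simp add: sum_subtractf)

text \<open>Deviations from the mean sum to zero, so centring the direction does not change the pairing.\<close>
lemma sum_dot_deviation_centred:
  assumes "0 < n"
  shows "(\<Sum>i=1..n. dot T (\<lambda>j. x i j - xbar n x j) (\<lambda>j. E i j - xbar n E j))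
       = (\<Sum>i=1..n. dot T (\<lambda>j. x i j - xbar n x j) (E i))"
proof -
  have "(\<Sum>i=1..n. \<Sum>j=1..2*T. (x i j - xbar n x j) * xbar n E j)
      = (\<Sum>j=1..2*T. (\<Sum>i=1..n. x i j - xbar n x j) * xbar n E j)"
    by (subst sum.swap) (simp add: sum_distrib_right)
  also have "\<dots> = 0" using sum_deviation_xbar[OF assms] by simp
  finally show ?thesis
    unfolding dot_def by (simp add: right_diff_distrib sum_subtractf)
qed

lemma Fobj_along_line:
  assumes "0 < n"
  shows "\<exists>h. \<forall>t. Fobj n T lam mu a b c (\<lambda>i j. x i j + t * E i j)
      = Fobj n T lam mu a b c x + t * Fobj_deriv n T lam mu a b c x E + t\<^sup>2 * h"
proof (intro exI allI)
  fix t
  have loc: "f_loc n T lam mu a b c i (\<lambda>j. x i j + t * E i j)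
      = f_loc n T lam mu a b c i (x i) + t * loc_deriv n T lam mu a b c i (x i) (E i)
        + t\<^sup>2 * loc_curv n T lam mu b c i (E i)" for i
    using quadratic_expansion_f_loc[OF assms] unfolding quadratic_expansion_def by simp
  have dev: "sqnorm T (\<lambda>j. x i j + t * E i j - xbar n (\<lambda>i j. x i j + t * E i j) j)
      = sqnorm T (\<lambda>j. x i j - xbar n x j)
        + t * (2 * dot T (\<lambda>j. x i j - xbar n x j) (\<lambda>j. E i j - xbar n E j))
        + t\<^sup>2 * sqnorm T (\<lambda>j. E i j - xbar n E j)" for i
  proof -
    have "(\<lambda>j. x i j + t * E i j - xbar n (\<lambda>i j. x i j + t * E i j) j)
        = (\<lambda>j. (x i j - xbar n x j) + t * (E i j - xbar n E j))"
      by (simp add: xbar_affine algebra_simps)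
    then show ?thesis by (simp add: sqnorm_affine)
  qed
  show "Fobj n T lam mu a b c (\<lambda>i j. x i j + t * E i j)
      = Fobj n T lam mu a b c x + t * Fobj_deriv n T lam mu a b c x E
        + t\<^sup>2 * ((\<Sum>i=1..n. loc_curv n T lam mu b c i (E i)) / real n
                 + lam / (2 * real n) * (\<Sum>i=1..n. sqnorm T (\<lambda>j. E i j - xbar n E j)))"
    unfolding Fobj_def Fobj_deriv_def loc dev sum.distrib sum_distrib_left[symmetric]
      sum_dot_deviation_centred[OF assms]
    by (simp add: sum.distrib sum_distrib_left sum_divide_distrib add_divide_distrib algebra_simps)
qed

definition basis_vec :: "nat \<Rightarrow> nat \<Rightarrow> real" where
  "basis_vec k = (\<lambda>j. if j = k then 1 else 0)"

lemma dot_basis_vec: "k \<in> {1..2*T} \<Longrightarrow> dot T u (basis_vec k) = u k"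
  unfolding dot_def basis_vec_def by (simp add: if_distrib cong: if_cong)

lemma coupling_first_basis_vec:
  assumes "1 \<le> m" "m \<le> T - 1"
  shows "coupling_first T u (basis_vec (2*m)) = u (2*m) - u (2*m+1)"
    and "coupling_first T u (basis_vec (2*m+1)) = u (2*m+1) - u (2*m)"
proof -
  have "coupling_first T u (basis_vec (2*m)) = (\<Sum>j=1..T-1. if j = m then u (2*m) - u (2*m+1) else 0)"
    unfolding coupling_first_def basis_vec_def by (rule sum.cong) auto
  moreover have "coupling_first T u (basis_vec (2*m+1))
      = (\<Sum>j=1..T-1. if j = m then u (2*m+1) - u (2*m) else 0)"
    unfolding coupling_first_def basis_vec_def by (rule sum.cong) auto
  ultimately show "coupling_first T u (basis_vec (2*m)) = u (2*m) - u (2*m+1)"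
    and "coupling_first T u (basis_vec (2*m+1)) = u (2*m+1) - u (2*m)"
    using assms by simp_all
qed

lemma coupling_second_basis_vec:
  assumes "m \<le> T - 1"
  shows "coupling_second T u (basis_vec (2*m+1)) = u (2*m+1) - u (2*m+2)"
    and "coupling_second T u (basis_vec (2*m+2)) = u (2*m+2) - u (2*m+1)"
proof -
  have "coupling_second T u (basis_vec (2*m+1)) = (\<Sum>j=0..T-1. if j = m then u (2*m+1) - u (2*m+2) else 0)"
    unfolding coupling_second_def basis_vec_def by (rule sum.cong) auto
  moreover have "coupling_second T u (basis_vec (2*m+2))
      = (\<Sum>j=0..T-1. if j = m then u (2*m+2) - u (2*m+1) else 0)"
    unfolding coupling_second_def basis_vec_def by (rule sum.cong) auto
  ultimately show "coupling_second T u (basis_vec (2*m+1)) = u (2*m+1) - u (2*m+2)"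
    and "coupling_second T u (basis_vec (2*m+2)) = u (2*m+2) - u (2*m+1)"
    using assms by simp_all
qed

lemma xbar_two_groups:
  assumes "M \<le> n" and "\<forall>i\<in>{1..M}. x i j = y" and "\<forall>i\<in>{M+1..n}. x i j = z"
  shows "xbar n x j = (real M * y + (real n - real M) * z) / real n"
proof -
  have "{1..n} = {1..M} \<union> {M+1..n}" using assms by auto
  then have "(\<Sum>i=1..n. x i j) = (\<Sum>i=1..M. x i j) + (\<Sum>i=M+1..n. x i j)"
    by (simp add: sum.union_disjoint)
  also have "\<dots> = real M * y + (real n - real M) * z" using assms by (simp add: of_nat_diff)
  finally show ?thesis unfolding xbar_def by simp
qed

lemma r_par_eq: "0 < n \<Longrightarrow> r_par n = real (first_size n) / real n"
  unfolding r_par_def first_size_def by (auto elim!: evenE)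

text \<open>The stationarity equations at two coordinates p, p' of one group's vector that are joined by a
  coupling term; q, q' are the same coordinates of the other group's vector.\<close>
definition stationary_link :: "real \<Rightarrow> real \<Rightarrow> real \<Rightarrow> real \<Rightarrow> real \<Rightarrow> real \<Rightarrow> real \<Rightarrow> real \<Rightarrow> bool"
  where "stationary_link lam mu c r p p' q q' \<longleftrightarrow>
    mu * p + lam * c * (p - p') + lam * r * (p - q) = 0 \<and> mu * p' + lam * c * (p' - p) + lam * r * (p' - q') = 0"

lemma stationary_link_Qmat:
  assumes "0 < lam" "0 < c" "0 < r" and "stationary_link lam mu c r p p' q q'"
  shows "vector [p', q'] = Qmat r (mu / lam) c *v (vector [q, p] :: real^2)"
proof -
  define k where "k = c + mu / lam + r"
  have p': "p' = (k * p - r * q) / c" and q': "q' = (k * p' - c * p) / r"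
    using assms unfolding stationary_link_def k_def by (simp_all add: field_simps)
  have "p' = - r / c * q + k / c * p" using p' assms by (simp add: field_simps)
  moreover have "q' = - k / c * q + (k\<^sup>2 / (c * r) - c / r) * p"
    unfolding q' p' using assms by (simp add: field_simps power2_eq_square)
  ultimately show ?thesis
    unfolding vec_eq_iff forall_2 Qmat_def Let_def k_def[symmetric]
    by (simp add: matrix_vector_mult_def sum_2)
qed

lemma wvec_recurrence:
  fixes y z :: "nat \<Rightarrow> real"
  assumes pos: "0 < lam" "0 < c" "0 < r"
    and first: "\<And>m. 1 \<le> m \<Longrightarrow> m < T \<Longrightarrow>
      stationary_link lam mu c r (y (2*m)) (y (2*m+1)) (z (2*m)) (z (2*m+1))"
    and second: "\<And>m. m < T \<Longrightarrow>
      stationary_link lam mu c r (z (2*m+1)) (z (2*m+2)) (y (2*m+1)) (y (2*m+2))"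
    and i: "i \<in> {1..2*T-1}"
  shows "wvec y z (i+1) = Qmat r (mu / lam) c *v wvec y z i"
proof (cases "even i")
  case True
  then obtain m where m: "i = 2*m" by (auto elim: evenE)
  with i have "1 \<le> m" "m < T" by auto
  from stationary_link_Qmat[OF pos first[OF this]] show ?thesis
    unfolding wvec_def m by simp
next
  case False
  then obtain m where m: "i = 2*m+1" by (auto elim: oddE)
  with i have "m < T" by auto
  from stationary_link_Qmat[OF pos second[OF this]] show ?thesis
    unfolding wvec_def m by simp
qed

context
  fixes n T :: nat and lam mu a b c :: real and xs :: "nat \<Rightarrow> nat \<Rightarrow> real"
  assumes n: "2 \<le> n" and lam: "0 < lam" and mu: "0 < mu" and b: "0 < b" and c: "0 < c"
    and minimizer: "\<forall>x. Fobj n T lam mu a b c xs \<le> Fobj n T lam mu a b c x"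
begin

lemma Fobj_deriv_minimizer: "Fobj_deriv n T lam mu a b c xs E = 0"
proof -
  have "0 < n" using n by simp
  then obtain h where line: "\<And>t. Fobj n T lam mu a b c (\<lambda>i j. xs i j + t * E i j)
      = Fobj n T lam mu a b c xs + t * Fobj_deriv n T lam mu a b c xs E + t\<^sup>2 * h"
    using Fobj_along_line by blast
  have "0 \<le> Fobj_deriv n T lam mu a b c xs E * t + h * t\<^sup>2" for t
    using minimizer[rule_format, of "\<lambda>i j. xs i j + t * E i j"] unfolding line by (simp add: mult.commute)
  then show ?thesis by (intro quadratic_nonneg_linear_coeff_eq_0[where h = h]) simp
qed

lemma block_stationary:
  assumes "p \<in> {1..n}"
  shows "loc_deriv n T lam mu a b c p (xs p) v + lam * dot T (\<lambda>j. xs p j - xbar n xs j) v = 0"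
proof -
  define E where "E = (\<lambda>i. if i = p then v else (\<lambda>j. 0))"
  have "Fobj_deriv n T lam mu a b c xs E
      = (loc_deriv n T lam mu a b c p (xs p) v + lam * dot T (\<lambda>j. xs p j - xbar n xs j) v) / real n"
    unfolding Fobj_deriv_def E_def using assms
    by (simp add: if_distrib loc_deriv_zero_direction dot_def cong: if_cong)
  with Fobj_deriv_minimizer[of E] n show ?thesis by simp
qed

text \<open>Blocks of one group share the local function, whose gradient is monotone; together with the
  strongly monotone consensus term this forces them to coincide.\<close>
lemma blocks_eq_within_group:
  assumes p: "p \<in> {1..n}" and q: "q \<in> {1..n}" and pq: "p \<le> first_size n \<longleftrightarrow> q \<le> first_size n"
    and j: "j \<in> {1..2*T}"
  shows "xs p j = xs q j"
proof -
  let ?d = "\<lambda>j. xs p j - xs q j"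
  have same: "loc_deriv n T lam mu a b c q = loc_deriv n T lam mu a b c p"
    using pq by (simp add: loc_deriv_def fun_eq_iff)
  have "loc_deriv n T lam mu a b c p (xs p) ?d - loc_deriv n T lam mu a b c p (xs q) ?d
      = 2 * loc_curv n T lam mu b c p ?d"
    using n by (intro quadratic_expansion_deriv_diff[OF quadratic_expansion_f_loc]) simp
  moreover have "0 \<le> loc_curv n T lam mu b c p ?d"
    using lam mu b c by (intro loc_curv_nonneg) simp_all
  moreover have "dot T (\<lambda>j. xs p j - xbar n xs j) ?d - dot T (\<lambda>j. xs q j - xbar n xs j) ?d = dot T ?d ?d"
    by (simp add: dot_diff_left)
  ultimately have "lam * dot T ?d ?d \<le> 0"
    using block_stationary[OF p, of ?d] block_stationary[OF q, of ?d] same by (simp add: algebra_simps)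
  then have "dot T ?d ?d = 0"
    using lam dot_nonneg[of T ?d] by (simp add: mult_le_0_iff)
  with j show ?thesis by (simp add: dot_eq_0_iff)
qed

lemma xbar_minimizer:
  assumes "j \<in> {1..2*T}"
  shows "xbar n xs j = (real (first_size n) * xs 1 j + (real n - real (first_size n)) * xs n j) / real n"
proof (rule xbar_two_groups)
  show "first_size n \<le> n" unfolding first_size_def by simp
  show "\<forall>i\<in>{1..first_size n}. xs i j = xs 1 j" and "\<forall>i\<in>{first_size n + 1..n}. xs i j = xs n j"
    using n assms by (auto intro!: blocks_eq_within_group simp: first_size_def)
qed

lemma deviation_second_group:
  assumes "j \<in> {1..2*T}"
  shows "xs n j - xbar n xs j = r_par n * (xs n j - xs 1 j)"
proof -
  have r: "r_par n = real (first_size n) / real n" using n by (simp add: r_par_eq)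
  show ?thesis using n unfolding xbar_minimizer[OF assms] r by (simp add: field_simps)
qed

lemma deviation_first_group:
  assumes "j \<in> {1..2*T}"
  shows "xs 1 j - xbar n xs j = group_size_ratio n * r_par n * (xs 1 j - xs n j)"
proof -
  have r: "r_par n = real (first_size n) / real n" using n by (simp add: r_par_eq)
  have "0 < real (first_size n)" using n unfolding first_size_def by simp
  with n show ?thesis unfolding xbar_minimizer[OF assms] group_size_ratio_def r by (simp add: field_simps)
qed

lemma second_group_coordinate:
  assumes k: "k \<in> {1..2*T}"
  shows "mu * xs n k + lam * c * coupling_second T (xs n) (basis_vec k)
         + lam * r_par n * (xs n k - xs 1 k) = 0"
proof -
  have "\<not> n \<le> first_size n" using n unfolding first_size_def by simp
  then have deriv: "loc_deriv n T lam mu a b c n (xs n) (basis_vec k)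
      = mu * xs n k + lam * c * coupling_second T (xs n) (basis_vec k)"
    using k by (simp add: loc_deriv_def second_deriv_def dot_basis_vec)
  have dev: "dot T (\<lambda>j. xs n j - xbar n xs j) (basis_vec k) = r_par n * (xs n k - xs 1 k)"
    using k deviation_second_group[OF k] by (simp add: dot_basis_vec)
  show ?thesis
    using block_stationary[of n "basis_vec k"] n unfolding deriv dev by (simp add: algebra_simps)
qed

lemma first_group_coordinate:
  assumes k: "k \<in> {2..2*T-1}"
  shows "mu * xs 1 k + lam * c * coupling_first T (xs 1) (basis_vec k)
         + lam * r_par n * (xs 1 k - xs n k) = 0"
proof -
  have k': "k \<in> {1..2*T}" using k by auto
  have "1 \<le> first_size n" using n unfolding first_size_def by simp
  moreover have "basis_vec k 1 = 0" and "basis_vec k (2*T) = 0"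
    using k unfolding basis_vec_def by auto
  ultimately have deriv: "loc_deriv n T lam mu a b c 1 (xs 1) (basis_vec k)
      = group_size_ratio n * (mu * xs 1 k + lam * c * coupling_first T (xs 1) (basis_vec k))"
    using k' by (simp add: loc_deriv_def first_deriv_def dot_basis_vec algebra_simps)
  have dev: "dot T (\<lambda>j. xs 1 j - xbar n xs j) (basis_vec k)
      = group_size_ratio n * r_par n * (xs 1 k - xs n k)"
    using k' deviation_first_group[OF k'] by (simp add: dot_basis_vec)
  have "group_size_ratio n * (mu * xs 1 k + lam * c * coupling_first T (xs 1) (basis_vec k)
        + lam * r_par n * (xs 1 k - xs n k)) = 0"
    using block_stationary[of 1 "basis_vec k"] n unfolding deriv dev by (simp add: algebra_simps)
  with group_size_ratio_pos[OF n] show ?thesis by simp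
qed

lemma first_group_link:
  assumes "1 \<le> m" "m < T"
  shows "stationary_link lam mu c (r_par n) (xs 1 (2*m)) (xs 1 (2*m+1)) (xs n (2*m)) (xs n (2*m+1))"
proof -
  have "m \<le> T - 1" using assms by simp
  note coupling = coupling_first_basis_vec[OF assms(1) this]
  have "2*m \<in> {2..2*T-1}" "2*m+1 \<in> {2..2*T-1}" using assms by auto
  from this[THEN first_group_coordinate] show ?thesis
    unfolding stationary_link_def coupling by (simp add: algebra_simps)
qed

lemma second_group_link:
  assumes "m < T"
  shows "stationary_link lam mu c (r_par n) (xs n (2*m+1)) (xs n (2*m+2)) (xs 1 (2*m+1)) (xs 1 (2*m+2))"
proof -
  have "m \<le> T - 1" using assms by simp
  note coupling = coupling_second_basis_vec[OF this]
  have "2*m+1 \<in> {1..2*T}" "2*m+2 \<in> {1..2*T}" using assms by auto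
  from this[THEN second_group_coordinate] show ?thesis
    unfolding stationary_link_def coupling by (simp add: algebra_simps)
qed

end

theorem mainTheorem2:
  fixes n T :: nat and lam mu a b c :: real and xs :: "nat \<Rightarrow> nat \<Rightarrow> real"
  assumes "T \<ge> 1" and "n \<ge> 2"
    and "lam > 0" and "mu > 0" and "b > 0" and "c > 0"
    and minimizer: "\<forall>x. Fobj n T lam mu a b c xs \<le> Fobj n T lam mu a b c x"
  shows "\<exists>y z :: nat \<Rightarrow> real.
           (\<forall>i\<in>{1..first_size n}. \<forall>j\<in>{1..2*T}. xs i j = y j)
         \<and> (\<forall>i\<in>{first_size n + 1..n}. \<forall>j\<in>{1..2*T}. xs i j = z j)
         \<and> (\<forall>i\<in>{1..2*T-1}. wvec y z (i+1) = Qmat (r_par n) (mu / lam) c *v wvec y z i)"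
proof (intro exI conjI ballI)
  note minimizer_facts = assms(2-7)
  show "xs i j = xs 1 j" if "i \<in> {1..first_size n}" "j \<in> {1..2*T}" for i j
    using that assms(2) by (intro blocks_eq_within_group[OF minimizer_facts]) (auto simp: first_size_def)
  show "xs i j = xs n j" if "i \<in> {first_size n + 1..n}" "j \<in> {1..2*T}" for i j
    using that assms(2) by (intro blocks_eq_within_group[OF minimizer_facts]) (auto simp: first_size_def)
  have "0 < r_par n" using assms(2) by (simp add: r_par_eq first_size_def)
  then show "wvec (xs 1) (xs n) (i+1) = Qmat (r_par n) (mu / lam) c *v wvec (xs 1) (xs n) i"
    if "i \<in> {1..2*T-1}" for i
    using that assms(3,6)
    by (intro wvec_recurrence first_group_link[OF minimizer_facts] second_group_link[OF minimizer_facts])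
qed

end
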